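(* Let $B$ be a unital $C^*$-algebra with a $*$-isomorphism $\psi:B\to M_n\otimes B$ satisfying $\psi(1)=I_n\otimes1$, let $A$ be a maximal abelian $*$-subalgebra of $B$, and let $\phi:A\to\mathbb{C}$ be a unital algebra homomorphism extended to a positive contraction $\phi:B\to\mathbb{C}$. If $\sigma_1(A)\subset A$, then $\phi_{m+1}(A)\subset M_n\otimes\phi_m(A)$ for all $m\ge1$.
   Context: $M_n=M_n(\mathbb{C})$, identity $I_n$. Define $\psi_0=\mathrm{id}_B$, $\psi_{m+1}=(\mathrm{id}^{\otimes m}\otimes\psi)\circ\psi_m:B\to M_n^{\otimes(m+1)}\otimes B$. With $f(b)=I_n\otimes b$, $\sigma_1=\psi^{-1}\circ f:B\to B$. For $m\ge1$, $\phi_m=(\mathrm{id}^{\otimes m}\otimes\phi)\circ\psi_m:B\to M_n^{\otimes m}$. *)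

theory Defs
  imports "HOL-Analysis.Analysis"
begin

locale unital_cstar_algebra =
  fixes sc :: "complex \<Rightarrow> 'b::{real_normed_algebra_1, banach} \<Rightarrow> 'b"
    and st :: "'b \<Rightarrow> 'b"
  assumes sc_add_left: "sc (a + b) x = sc a x + sc b x"
    and sc_add_right: "sc a (x + y) = sc a x + sc a y"
    and sc_sc: "sc a (sc b x) = sc (a * b) x"
    and sc_one: "sc 1 x = x"
    and sc_of_real: "sc (complex_of_real r) x = scaleR r x"
    and sc_mult_left: "sc a x * y = sc a (x * y)"
    and sc_mult_right: "x * sc a y = sc a (x * y)"
    and norm_sc: "norm (sc a x) = cmod a * norm x"
    and st_st: "st (st x) = x"
    and st_add: "st (x + y) = st x + st y"
    and st_sc: "st (sc a x) = sc (cnj a) (st x)"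
    and st_mult: "st (x * y) = st y * st x"
    and cstar_identity: "norm (st x * x) = (norm x)^2"

definition star_subalgebra ::
  "(complex \<Rightarrow> 'b \<Rightarrow> 'b) \<Rightarrow> ('b \<Rightarrow> 'b) \<Rightarrow> 'b::ring set \<Rightarrow> bool" where
  "star_subalgebra sc st A \<longleftrightarrow> 0 \<in> A \<and>
     (\<forall>x\<in>A. \<forall>y\<in>A. x + y \<in> A \<and> x * y \<in> A) \<and>
     (\<forall>a. \<forall>x\<in>A. sc a x \<in> A) \<and> (\<forall>x\<in>A. st x \<in> A)"

definition abelian_star_subalgebra ::
  "(complex \<Rightarrow> 'b \<Rightarrow> 'b) \<Rightarrow> ('b \<Rightarrow> 'b) \<Rightarrow> 'b::ring set \<Rightarrow> bool" where
  "abelian_star_subalgebra sc st A \<longleftrightarrow> star_subalgebra sc st A \<and>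
     (\<forall>x\<in>A. \<forall>y\<in>A. x * y = y * x)"

definition maximal_abelian_star_subalgebra ::
  "(complex \<Rightarrow> 'b \<Rightarrow> 'b) \<Rightarrow> ('b \<Rightarrow> 'b) \<Rightarrow> 'b::ring set \<Rightarrow> bool" where
  "maximal_abelian_star_subalgebra sc st A \<longleftrightarrow> abelian_star_subalgebra sc st A \<and>
     (\<forall>A'. A \<subseteq> A' \<and> abelian_star_subalgebra sc st A' \<longrightarrow> A' = A)"

text \<open>M_n \<otimes> B is identified with n x n matrices over B, indexed by a finite type 'n
with n = CARD('n).  The matrix X corresponds to the sum of e_ij \<otimes> X i j.\<close>

definition mat_mult :: "('n::finite \<Rightarrow> 'n \<Rightarrow> 'b::ring) \<Rightarrow> ('n \<Rightarrow> 'n \<Rightarrow> 'b) \<Rightarrow> 'n \<Rightarrow> 'n \<Rightarrow> 'b" where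
  "mat_mult X Y = (\<lambda>i j. \<Sum>k\<in>UNIV. X i k * Y k j)"

definition mat_star :: "('b \<Rightarrow> 'b) \<Rightarrow> ('n \<Rightarrow> 'n \<Rightarrow> 'b) \<Rightarrow> 'n \<Rightarrow> 'n \<Rightarrow> 'b" where
  "mat_star st X = (\<lambda>i j. st (X j i))"

definition id_tensor :: "'b::zero \<Rightarrow> 'n \<Rightarrow> 'n \<Rightarrow> 'b" where
  "id_tensor b = (\<lambda>i j. if i = j then b else 0)"

definition star_isomorphism ::
  "(complex \<Rightarrow> 'b \<Rightarrow> 'b) \<Rightarrow> ('b \<Rightarrow> 'b) \<Rightarrow> ('b::ring \<Rightarrow> 'n::finite \<Rightarrow> 'n \<Rightarrow> 'b) \<Rightarrow> bool" where
  "star_isomorphism sc st \<psi> \<longleftrightarrow> bij \<psi> \<and>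
     (\<forall>x y. \<psi> (x + y) = (\<lambda>i j. \<psi> x i j + \<psi> y i j)) \<and>
     (\<forall>a x. \<psi> (sc a x) = (\<lambda>i j. sc a (\<psi> x i j))) \<and>
     (\<forall>x y. \<psi> (x * y) = mat_mult (\<psi> x) (\<psi> y)) \<and>
     (\<forall>x. \<psi> (st x) = mat_star st (\<psi> x))"

text \<open>M_n^{\<otimes>m} \<otimes> B is identified with functions on pairs of index lists (of length m):
F corresponds to the sum over I, J of e_{I_1 J_1} \<otimes> ... \<otimes> e_{I_m J_m} \<otimes> F I J.
Entries at index lists of other lengths are 0.  M_n^{\<otimes>m} is the case B = \<complex>.\<close>

text \<open>id^{\<otimes>m} \<otimes> \<psi> : the new M_n factor is placed last (just before B).\<close>
definition tensor_id_map ::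
  "('b \<Rightarrow> 'n \<Rightarrow> 'n \<Rightarrow> 'b) \<Rightarrow> ('n list \<Rightarrow> 'n list \<Rightarrow> 'b) \<Rightarrow> 'n list \<Rightarrow> 'n list \<Rightarrow> 'b::zero" where
  "tensor_id_map \<psi> F = (\<lambda>I J. if I \<noteq> [] \<and> J \<noteq> []
      then \<psi> (F (butlast I) (butlast J)) (last I) (last J) else 0)"

fun psi_iter :: "('b \<Rightarrow> 'n \<Rightarrow> 'n \<Rightarrow> 'b) \<Rightarrow> nat \<Rightarrow> 'b \<Rightarrow> 'n list \<Rightarrow> 'n list \<Rightarrow> 'b::zero" where
  "psi_iter \<psi> 0 b = (\<lambda>I J. if I = [] \<and> J = [] then b else 0)"
| "psi_iter \<psi> (Suc m) b = tensor_id_map \<psi> (psi_iter \<psi> m b)"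

definition phi_iter ::
  "('b::zero \<Rightarrow> 'n \<Rightarrow> 'n \<Rightarrow> 'b) \<Rightarrow> ('b \<Rightarrow> complex) \<Rightarrow> nat \<Rightarrow> 'b \<Rightarrow> 'n list \<Rightarrow> 'n list \<Rightarrow> complex" where
  "phi_iter \<psi> \<phi> m b = (\<lambda>I J. \<phi> (psi_iter \<psi> m b I J))"

definition sigma1 :: "('b \<Rightarrow> 'n \<Rightarrow> 'n \<Rightarrow> 'b) \<Rightarrow> 'b \<Rightarrow> 'b::zero" where
  "sigma1 \<psi> b = inv \<psi> (id_tensor b)"

text \<open>M_n \<otimes> S inside M_n^{\<otimes>(m+1)}, for S a set of elements of M_n^{\<otimes>m}:
the elements sum over i j of e_ij \<otimes> X i j with all X i j \<in> S (the new factor is first).\<close>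
definition kron_left :: "('n \<Rightarrow> 'n \<Rightarrow> ('n list \<Rightarrow> 'n list \<Rightarrow> 'c)) \<Rightarrow> 'n list \<Rightarrow> 'n list \<Rightarrow> 'c::zero" where
  "kron_left X = (\<lambda>I J. if I \<noteq> [] \<and> J \<noteq> [] then X (hd I) (hd J) (tl I) (tl J) else 0)"

definition Mn_tensor :: "('n list \<Rightarrow> 'n list \<Rightarrow> 'c::zero) set \<Rightarrow> ('n list \<Rightarrow> 'n list \<Rightarrow> 'c) set" where
  "Mn_tensor S = {kron_left X | X. \<forall>i j. X i j \<in> S}"

definition complex_linear_functional ::
  "(complex \<Rightarrow> 'b \<Rightarrow> 'b) \<Rightarrow> ('b::plus \<Rightarrow> complex) \<Rightarrow> bool" where
  "complex_linear_functional sc \<phi> \<longleftrightarrow>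
     (\<forall>x y. \<phi> (x + y) = \<phi> x + \<phi> y) \<and> (\<forall>a x. \<phi> (sc a x) = a * \<phi> x)"

definition positive_contraction ::
  "(complex \<Rightarrow> 'b \<Rightarrow> 'b) \<Rightarrow> ('b \<Rightarrow> 'b) \<Rightarrow> ('b::real_normed_algebra \<Rightarrow> complex) \<Rightarrow> bool" where
  "positive_contraction sc st \<phi> \<longleftrightarrow> complex_linear_functional sc \<phi> \<and>
     (\<forall>x. Im (\<phi> (st x * x)) = 0 \<and> 0 \<le> Re (\<phi> (st x * x))) \<and>
     (\<forall>x. cmod (\<phi> x) \<le> norm x)"

end

theory Submission
  imports Defs
begin

text \<open>Since \<sigma>_1(A) \<subseteq> A, every I_n \<otimes> b with b \<in> A lies in \<psi>(A). As A is abelian, \<psi>(a)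
commutes with all of these for a \<in> A, i.e. every entry \<psi>(a)_ij lies in the commutant of A, which
for a maximal abelian *-subalgebra is A itself. Unfolding the iterates from the left,
\<psi>_{m+1}(a) = \<Sum> e_ij \<otimes> \<psi>_m(\<psi>(a)_ij), hence \<phi>_{m+1}(a) = \<Sum> e_ij \<otimes> \<phi>_m(\<psi>(a)_ij) with all
\<psi>(a)_ij \<in> A.\<close>

definition commutant :: "'a::times set \<Rightarrow> 'a set" where
  "commutant S = {y. \<forall>t\<in>S. y * t = t * y}"

lemma mem_commutant_iff: "y \<in> commutant S \<longleftrightarrow> (\<forall>t\<in>S. y * t = t * y)"
  by (simp add: commutant_def)

lemma subset_bicommutant: "S \<subseteq> commutant (commutant S)"
  by (auto simp: commutant_def)

lemma commutant_antimono: "S \<subseteq> T \<Longrightarrow> commutant T \<subseteq> commutant S"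
  by (auto simp: commutant_def)

context unital_cstar_algebra
begin

lemma st_commutant:
  assumes "\<forall>t\<in>S. st t \<in> S" and "y \<in> commutant S"
  shows "st y \<in> commutant S"
proof -
  have "st y * t = t * st y" if "t \<in> S" for t
  proof -
    have "st t * y = y * st t" using assms that by (simp add: mem_commutant_iff)
    then have "st (st t * y) = st (y * st t)" by simp
    then show ?thesis by (simp add: st_mult st_st)
  qed
  then show ?thesis by (simp add: mem_commutant_iff)
qed

lemma star_subalgebra_commutant:
  assumes "\<forall>t\<in>S. st t \<in> S"
  shows "star_subalgebra sc st (commutant S)"
  unfolding star_subalgebra_def
proof (intro conjI ballI allI)
  fix x y assume x: "x \<in> commutant S" and y: "y \<in> commutant S"
  then show "x + y \<in> commutant S"
    by (simp add: mem_commutant_iff distrib_left distrib_right)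
  have "x * y * t = t * (x * y)" if "t \<in> S" for t
    using x y that by (simp add: mem_commutant_iff mult.assoc) (simp flip: mult.assoc)
  then show "x * y \<in> commutant S" by (simp add: mem_commutant_iff)
next
  fix a x assume "x \<in> commutant S"
  then show "sc a x \<in> commutant S"
    by (simp add: mem_commutant_iff sc_mult_left sc_mult_right)
next
  fix x assume "x \<in> commutant S"
  then show "st x \<in> commutant S" by (rule st_commutant[OF assms])
qed (simp add: mem_commutant_iff)

lemma abelian_star_subalgebra_bicommutant:
  assumes st_closed: "\<forall>t\<in>S. st t \<in> S" and abelian: "\<forall>x\<in>S. \<forall>y\<in>S. x * y = y * x"
  shows "abelian_star_subalgebra sc st (commutant (commutant S))"
proof -
  have "S \<subseteq> commutant S" using abelian by (auto simp: mem_commutant_iff)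
  then have "commutant (commutant S) \<subseteq> commutant S" by (rule commutant_antimono)
  moreover have "\<forall>t\<in>commutant S. st t \<in> commutant S"
    using st_commutant[OF st_closed] by blast
  ultimately show ?thesis
    unfolding abelian_star_subalgebra_def
    by (auto intro: star_subalgebra_commutant simp: mem_commutant_iff)
qed

lemma selfadjoint_commutant_in_masa:
  assumes masa: "maximal_abelian_star_subalgebra sc st A"
    and "st h = h" and h: "h \<in> commutant A"
  shows "h \<in> A"
proof -
  have A: "star_subalgebra sc st A" "\<forall>x\<in>A. \<forall>y\<in>A. x * y = y * x"
    using masa by (auto simp: maximal_abelian_star_subalgebra_def abelian_star_subalgebra_def)
  let ?T = "insert h A"
  have "\<forall>t\<in>?T. st t \<in> ?T" using A(1) \<open>st h = h\<close> by (simp add: star_subalgebra_def)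
  moreover have "\<forall>x\<in>?T. \<forall>y\<in>?T. x * y = y * x"
    using A(2) h by (auto simp: mem_commutant_iff)
  ultimately have "abelian_star_subalgebra sc st (commutant (commutant ?T))"
    by (rule abelian_star_subalgebra_bicommutant)
  moreover have "?T \<subseteq> commutant (commutant ?T)" by (rule subset_bicommutant)
  ultimately have "commutant (commutant ?T) = A"
    using masa by (auto simp: maximal_abelian_star_subalgebra_def)
  with \<open>?T \<subseteq> commutant (commutant ?T)\<close> show ?thesis by blast
qed

lemma commutant_masa:
  assumes masa: "maximal_abelian_star_subalgebra sc st A"
  shows "commutant A = A"
proof
  have A: "star_subalgebra sc st A" "\<forall>x\<in>A. \<forall>y\<in>A. x * y = y * x"
    using masa by (auto simp: maximal_abelian_star_subalgebra_def abelian_star_subalgebra_def)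
  then show "A \<subseteq> commutant A" by (auto simp: mem_commutant_iff)
  show "commutant A \<subseteq> A"
  proof
    fix x assume x: "x \<in> commutant A"
    have st_x: "st x \<in> commutant A"
      using st_commutant[OF _ x] A(1) by (simp add: star_subalgebra_def)
    define h where "h = x + st x"
    define k where "k = sc \<i> x + sc (- \<i>) (st x)"
    have "h \<in> A"
      using x st_x
      by (intro selfadjoint_commutant_in_masa[OF masa])
        (auto simp: h_def st_add st_st add.commute mem_commutant_iff distrib_left distrib_right)
    moreover have "k \<in> A"
      using x st_x
      by (intro selfadjoint_commutant_in_masa[OF masa])
        (auto simp: k_def st_add st_st st_sc add.commute mem_commutant_iff distrib_left distrib_right
          sc_mult_left sc_mult_right)
    ultimately have "sc (1/2) h + sc (- \<i>/2) k \<in> A"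
      using A(1) by (simp add: star_subalgebra_def)
    also have "sc (1/2) h + sc (- \<i>/2) k = sc 1 x + sc 0 (st x)"
      by (simp add: h_def k_def sc_add_right sc_sc algebra_simps flip: sc_add_left)
    also have "\<dots> = x"
      using sc_of_real[of 0 "st x"] by (simp add: sc_one)
    finally show "x \<in> A" .
  qed
qed

end

lemma mat_mult_id_tensor_right: "mat_mult X (id_tensor b) i j = X i j * (b::'b::ring)"
  by (simp add: mat_mult_def id_tensor_def if_distrib[where f="\<lambda>z. _ * z"] cong: if_cong)

lemma mat_mult_id_tensor_left: "mat_mult (id_tensor b) X i j = (b::'b::ring) * X i j"
  by (simp add: mat_mult_def id_tensor_def if_distrib[where f="\<lambda>z. z * _"] cong: if_cong)

lemma star_isomorphism_zero:
  assumes "star_isomorphism sc st \<psi>"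
  shows "\<psi> 0 = (\<lambda>_ _. 0)"
proof -
  have "\<psi> (0 + 0) = (\<lambda>i j. \<psi> 0 i j + \<psi> 0 i j)"
    using assms by (simp only: star_isomorphism_def)
  then show ?thesis by (simp add: fun_eq_iff)
qed

lemma star_isomorphism_entries_commutant:
  assumes iso: "star_isomorphism sc st \<psi>"
    and abelian: "\<forall>x\<in>A. \<forall>y\<in>A. x * y = y * x"
    and invariant: "sigma1 \<psi> ` A \<subseteq> A" and "a \<in> A"
  shows "\<psi> a i j \<in> commutant A"
proof -
  have "\<psi> a i j * b = b * \<psi> a i j" if "b \<in> A" for b
  proof -
    have "sigma1 \<psi> b \<in> A" using invariant that by blast
    moreover have "\<psi> (sigma1 \<psi> b) = id_tensor b"
      using iso by (simp add: sigma1_def star_isomorphism_def bij_is_surj surj_f_inv_f)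
    ultimately have "mat_mult (\<psi> a) (id_tensor b) = mat_mult (id_tensor b) (\<psi> a)"
      using iso abelian \<open>a \<in> A\<close> by (metis star_isomorphism_def)
    then show ?thesis
      by (metis mat_mult_id_tensor_left mat_mult_id_tensor_right)
  qed
  then show ?thesis by (simp add: mem_commutant_iff)
qed

lemma tensor_id_map_kron_left:
  assumes "\<psi> 0 = (\<lambda>_ _. 0)"
  shows "tensor_id_map \<psi> (kron_left X) = kron_left (\<lambda>i j. tensor_id_map \<psi> (X i j))"
proof (intro ext)
  fix I J
  show "tensor_id_map \<psi> (kron_left X) I J = kron_left (\<lambda>i j. tensor_id_map \<psi> (X i j)) I J"
  proof (cases "I = [] \<or> J = []")
    case False
    then obtain i I' j J' where "I = i # I'" "J = j # J'" by (meson neq_Nil_conv)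
    then show ?thesis
      using assms by (cases "I' = []"; cases "J' = []") (auto simp: tensor_id_map_def kron_left_def)
  qed (auto simp: tensor_id_map_def kron_left_def)
qed

lemma psi_iter_Suc_kron_left:
  assumes "\<psi> 0 = (\<lambda>_ _. 0)"
  shows "psi_iter \<psi> (Suc m) b = kron_left (\<lambda>i j. psi_iter \<psi> m (\<psi> b i j))"
proof (induction m arbitrary: b)
  case 0
  show ?case
  proof (intro ext)
    fix I J
    show "psi_iter \<psi> (Suc 0) b I J = kron_left (\<lambda>i j. psi_iter \<psi> 0 (\<psi> b i j)) I J"
    proof (cases "I = [] \<or> J = []")
      case False
      then obtain i I' j J' where "I = i # I'" "J = j # J'" by (meson neq_Nil_conv)
      then show ?thesis
        using assms by (cases "I' = []"; cases "J' = []") (auto simp: tensor_id_map_def kron_left_def)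
    qed (auto simp: tensor_id_map_def kron_left_def)
  qed
next
  case (Suc m)
  then show ?case
    by (simp only: psi_iter.simps(2) tensor_id_map_kron_left[of \<psi>, OF assms])
qed

lemma phi_iter_Suc_kron_left:
  assumes "\<psi> 0 = (\<lambda>_ _. 0)" and "\<phi> 0 = 0"
  shows "phi_iter \<psi> \<phi> (Suc m) b = kron_left (\<lambda>i j. phi_iter \<psi> \<phi> m (\<psi> b i j))"
  using assms by (auto simp: fun_eq_iff phi_iter_def kron_left_def psi_iter_Suc_kron_left
      simp del: psi_iter.simps)

lemma complex_linear_functional_zero:
  assumes "complex_linear_functional sc \<phi>"
  shows "\<phi> (0::'b::monoid_add) = 0"
proof -
  have "\<phi> (0 + 0) = \<phi> 0 + \<phi> 0"
    using assms by (simp only: complex_linear_functional_def)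
  then show ?thesis by simp
qed

theorem proposition3p6:
  fixes sc :: "complex \<Rightarrow> 'b::{real_normed_algebra_1, banach} \<Rightarrow> 'b"
    and st :: "'b \<Rightarrow> 'b"
    and \<psi> :: "'b \<Rightarrow> 'n::finite \<Rightarrow> 'n \<Rightarrow> 'b"
    and A :: "'b set"
    and \<phi> :: "'b \<Rightarrow> complex"
  assumes "unital_cstar_algebra sc st"
    and "star_isomorphism sc st \<psi>"
    and "\<psi> 1 = id_tensor 1"
    and "maximal_abelian_star_subalgebra sc st A"
    and "\<phi> 1 = 1"
    and "\<forall>a\<in>A. \<forall>b\<in>A. \<phi> (a * b) = \<phi> a * \<phi> b"
    and "positive_contraction sc st \<phi>"
    and "sigma1 \<psi> ` A \<subseteq> A"
  shows "\<forall>m\<ge>1. phi_iter \<psi> \<phi> (m + 1) ` A \<subseteq> Mn_tensor (phi_iter \<psi> \<phi> m ` A)"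
proof (intro allI impI subsetI)
  fix m x assume "x \<in> phi_iter \<psi> \<phi> (m + 1) ` A"
  then obtain a where "a \<in> A" and x: "x = phi_iter \<psi> \<phi> (Suc m) a" by auto
  have abelian: "\<forall>x\<in>A. \<forall>y\<in>A. x * y = y * x"
    using assms(4) by (simp add: maximal_abelian_star_subalgebra_def abelian_star_subalgebra_def)
  have "\<psi> a i j \<in> A" for i j
    using star_isomorphism_entries_commutant[OF assms(2) abelian assms(8) \<open>a \<in> A\<close>]
      unital_cstar_algebra.commutant_masa[OF assms(1,4)] by simp
  moreover have "\<phi> 0 = 0"
    using assms(7) complex_linear_functional_zero by (auto simp: positive_contraction_def)
  moreover have "x = kron_left (\<lambda>i j. phi_iter \<psi> \<phi> m (\<psi> a i j))"
    using x phi_iter_Suc_kron_left star_isomorphism_zero[OF assms(2)] \<open>\<phi> 0 = 0\<close> by blast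
  ultimately show "x \<in> Mn_tensor (phi_iter \<psi> \<phi> m ` A)"
    unfolding Mn_tensor_def by blast
qed

end
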